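(* There exists a set $\mathcal{A} = \{a_1,a_2,a_3,\ldots\}$ of positive integers such that (i) every positive integer $n \notin \{2,3,7,11,15\}$ has a Wilf partition that is a fixed point of the involution $\iota$ and in which every part size and every multiplicity belongs to $\mathcal{A}$; and (ii) $|\mathcal{A} \cap [1,m]| = O(\log m)$ as $m \to \infty$.
   Context: A Wilf partition of a positive integer $n$ is an integer partition of $n$ in which all nonzero multiplicities are distinct. Writing a partition as the set of its part–multiplicity pairs $(p_i,m_i)$ (meaning the part $p_i$ occurs exactly $m_i\ge 1$ times, the $p_i$ being distinct), the involution $\iota$ on Wilf partitions interchanges part sizes and multiplicities, sending the partition with pairs $\{(p_i,m_i)\}$ to the one with pairs $\{(m_i,p_i)\}$. A fixed point of $\iota$ is a Wilf partition such that whenever $(p,m)$ is one of its part–multiplicity pairs, so is $(m,p)$. *)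

theory Defs
  imports Complex_Main "HOL-Library.Multiset" "HOL-Library.Landau_Symbols"
begin

definition is_partition :: "nat \<Rightarrow> nat multiset \<Rightarrow> bool" where
  "is_partition n P \<longleftrightarrow> (\<forall>p\<in>#P. p > 0) \<and> sum_mset P = n"

definition wilf_partition :: "nat \<Rightarrow> nat multiset \<Rightarrow> bool" where
  "wilf_partition n P \<longleftrightarrow> is_partition n P \<and> inj_on (count P) (set_mset P)"

text \<open>Fixed point of the involution swapping parts and multiplicities:
  whenever (p, m) is a part-multiplicity pair, so is (m, p).\<close>
definition iota_fixed :: "nat multiset \<Rightarrow> bool" where
  "iota_fixed P \<longleftrightarrow> (\<forall>p\<in>#P. count P p \<in># P \<and> count P (count P p) = p)"

end

theory Submission
  imports Defs
begin

text \<open>In an \<open>\<iota>\<close>-fixed partition the multiplicity map is an involution on the parts, so such a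
  partition is automatically Wilf. Doubling every part and every multiplicity of an \<open>\<iota>\<close>-fixed
  partition of \<open>m\<close> gives an \<open>\<iota>\<close>-fixed partition of \<open>4m\<close> with even parts, and an \<open>\<iota>\<close>-fixed
  partition of some \<open>e\<close> with odd parts can be added to it without destroying the symmetry. With
  \<open>\<A> = {c 2\<^sup>k | c \<in> {1,3,5,7}}\<close> the odd "digits" alone realise \<open>e \<in> {0,1,6,9,10,14,19,23,31,44}\<close>,
  which meets every residue class mod 4, so \<open>n = e + 4m\<close> reduces \<open>n\<close> to a smaller \<open>m\<close>; the few
  small cases where this fails are settled by computation, and \<open>8, 12, 28, 32\<close> are \<open>2 \<cdot> 1 \<cdot> b\<close>
  with \<open>b \<in> \<A>\<close>. Finally \<open>\<A>\<close> has at most \<open>4 (log\<^sub>2 m + 1)\<close> elements up to \<open>m\<close>.\<close>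

lemma iota_fixed_inj_on_count: "iota_fixed P \<Longrightarrow> inj_on (count P) (set_mset P)"
  unfolding iota_fixed_def by (metis inj_onI)

lemma iota_fixed_empty [simp]: "iota_fixed {#}"
  by (simp add: iota_fixed_def)

lemma iota_fixed_replicate_self: "iota_fixed (replicate_mset c c)"
  by (auto simp: iota_fixed_def)

lemma iota_fixed_swap_pair:
  assumes "0 < a" "0 < b" "a \<noteq> b"
  shows "iota_fixed (replicate_mset b a + replicate_mset a b)"
  using assms by (auto simp: iota_fixed_def)

lemma iota_fixed_union:
  assumes P: "iota_fixed P" and Q: "iota_fixed Q" and disj: "set_mset P \<inter> set_mset Q = {}"
  shows "iota_fixed (P + Q)"
  unfolding iota_fixed_def
proof
  fix p assume "p \<in># P + Q"
  then consider "p \<in># P" | "p \<in># Q" by auto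
  then show "count (P + Q) p \<in># P + Q \<and> count (P + Q) (count (P + Q) p) = p"
  proof cases
    case 1
    with P have "count P p \<in># P" "count P (count P p) = p" by (auto simp: iota_fixed_def)
    moreover from this 1 disj have "count Q p = 0" "count Q (count P p) = 0"
      by (auto simp: not_in_iff[symmetric])
    ultimately show ?thesis by simp
  next
    case 2
    with Q have "count Q p \<in># Q" "count Q (count Q p) = p" by (auto simp: iota_fixed_def)
    moreover from this 2 disj have "count P p = 0" "count P (count Q p) = 0"
      by (auto simp: not_in_iff[symmetric])
    ultimately show ?thesis by simp
  qed
qed

lemma count_image_mset_inj:
  "inj f \<Longrightarrow> count (image_mset f M) (f x) = count M x"
  by (induction M) (auto dest: injD)

lemma set_mset_repeat_mset: "0 < c \<Longrightarrow> set_mset (repeat_mset c P) = set_mset P"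
  by (simp add: set_eq_iff flip: count_greater_zero_iff)

lemma iota_fixed_scale:
  assumes "0 < c" "iota_fixed P"
  shows "iota_fixed (image_mset ((*) c) (repeat_mset c P))" (is "iota_fixed ?Q")
  unfolding iota_fixed_def
proof
  have "inj ((*) c)"
    using assms(1) by (simp add: inj_on_mult)
  then have count_Q: "count ?Q (c * x) = c * count P x" for x
    by (simp add: count_image_mset_inj)
  fix q assume "q \<in># ?Q"
  then obtain p where p: "p \<in># P" "q = c * p"
    using assms(1) by (auto simp: set_mset_repeat_mset)
  then have "count P p \<in># P" "count P (count P p) = p"
    using assms(2) by (auto simp: iota_fixed_def)
  then show "count ?Q q \<in># ?Q \<and> count ?Q (count ?Q q) = q"
    using p assms(1) by (simp add: count_Q set_mset_repeat_mset)
qed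

definition fixed_partition :: "nat set \<Rightarrow> nat \<Rightarrow> bool" where
  "fixed_partition A n \<longleftrightarrow> (\<exists>P. iota_fixed P \<and> set_mset P \<subseteq> A \<and> sum_mset P = n)"

lemma fixed_partition_zero: "fixed_partition A 0"
  unfolding fixed_partition_def by (intro exI[of _ "{#}"]) simp

lemma fixed_partition_square:
  "0 < c \<Longrightarrow> fixed_partition {c} (c * c)"
  unfolding fixed_partition_def
  by (intro exI[of _ "replicate_mset c c"]) (simp add: iota_fixed_replicate_self)

lemma fixed_partition_swap_pair:
  "0 < a \<Longrightarrow> 0 < b \<Longrightarrow> a \<noteq> b \<Longrightarrow> fixed_partition {a, b} (2 * a * b)"
  unfolding fixed_partition_def
  by (intro exI[of _ "replicate_mset b a + replicate_mset a b"]) (auto simp: iota_fixed_swap_pair)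

lemma fixed_partition_mono:
  "A \<subseteq> B \<Longrightarrow> fixed_partition A n \<Longrightarrow> fixed_partition B n"
  unfolding fixed_partition_def by blast

lemma fixed_partition_union:
  assumes "fixed_partition A m" "fixed_partition B n" "A \<inter> B = {}"
  shows "fixed_partition (A \<union> B) (m + n)"
proof -
  obtain P Q where "iota_fixed P" "set_mset P \<subseteq> A" "sum_mset P = m"
    and "iota_fixed Q" "set_mset Q \<subseteq> B" "sum_mset Q = n"
    using assms(1,2) unfolding fixed_partition_def by blast
  with assms(3) show ?thesis
    unfolding fixed_partition_def by (intro exI[of _ "P + Q"]) (auto intro: iota_fixed_union)
qed

lemma fixed_partition_scale:
  assumes "0 < c" "fixed_partition A n"
  shows "fixed_partition ((*) c ` A) (c * c * n)"
proof -
  obtain P where "iota_fixed P" "set_mset P \<subseteq> A" "sum_mset P = n"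
    using assms(2) unfolding fixed_partition_def by blast
  moreover have "sum_mset (image_mset ((*) c) (repeat_mset c P)) = c * c * sum_mset P"
    by (induction P) (simp_all add: algebra_simps)
  ultimately show ?thesis
    using assms(1) unfolding fixed_partition_def
    by (intro exI[of _ "image_mset ((*) c) (repeat_mset c P)"])
      (auto simp: set_mset_repeat_mset intro: iota_fixed_scale)
qed

lemma fixed_partition_wilf_partition:
  assumes "\<forall>a\<in>A. 0 < a" "fixed_partition A n"
  shows "\<exists>P. wilf_partition n P \<and> iota_fixed P \<and> (\<forall>p\<in>#P. p \<in> A \<and> count P p \<in> A)"
proof -
  obtain P where P: "iota_fixed P" "set_mset P \<subseteq> A" "sum_mset P = n"
    using assms(2) unfolding fixed_partition_def by blast
  then have "wilf_partition n P"
    using assms(1) by (auto simp: wilf_partition_def is_partition_def iota_fixed_inj_on_count)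
  moreover have "\<forall>p\<in>#P. p \<in> A \<and> count P p \<in> A"
    using P(1,2) by (auto simp: iota_fixed_def)
  ultimately show ?thesis using P(1) by blast
qed

definition pow2_multiples :: "nat set \<Rightarrow> nat set" where
  "pow2_multiples D = {c * 2 ^ k | c k. c \<in> D}"

lemma pow2_multiplesI: "c \<in> D \<Longrightarrow> c * 2 ^ k \<in> pow2_multiples D"
  unfolding pow2_multiples_def by blast

lemma subset_pow2_multiples: "D \<subseteq> pow2_multiples D"
  using pow2_multiplesI[where k = 0] by auto

lemma double_pow2_multiples_subset: "(*) 2 ` pow2_multiples D \<subseteq> pow2_multiples D"
proof
  fix x assume "x \<in> (*) 2 ` pow2_multiples D"
  then obtain c k where "c \<in> D" "x = 2 * (c * 2 ^ k)"
    unfolding pow2_multiples_def by auto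
  moreover have "2 * (c * 2 ^ k) = c * 2 ^ Suc k" by simp
  ultimately show "x \<in> pow2_multiples D" by (metis pow2_multiplesI)
qed

lemma pow2_multiples_pos: "0 \<notin> D \<Longrightarrow> a \<in> pow2_multiples D \<Longrightarrow> 0 < a"
  unfolding pow2_multiples_def by (auto intro!: gr0I)

lemma infinite_pow2_multiples:
  assumes "c \<in> D" "0 < c"
  shows "infinite (pow2_multiples D)"
proof
  assume "finite (pow2_multiples D)"
  moreover have "range (\<lambda>k. c * 2 ^ k) \<subseteq> pow2_multiples D"
    using assms(1) by (auto intro: pow2_multiplesI)
  ultimately have "finite (range (\<lambda>k::nat. c * 2 ^ k))"
    by (rule finite_subset[rotated])
  moreover have "inj (\<lambda>k::nat. c * 2 ^ k)"
    using assms(2) by (auto intro: injI)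
  ultimately show False
    using finite_imageD by blast
qed

lemma card_pow2_multiples_le:
  assumes "finite D" "1 \<le> m"
  shows "real (card (pow2_multiples D \<inter> {1..m})) \<le> card D * (log 2 (real m) + 1)"
proof -
  define K where "K = nat \<lfloor>log 2 (real m)\<rfloor>"
  have "pow2_multiples D \<inter> {1..m} \<subseteq> (\<lambda>(c, k). c * 2 ^ k) ` (D \<times> {..K})"
  proof
    fix x assume x: "x \<in> pow2_multiples D \<inter> {1..m}"
    then obtain c k where ck: "x = c * 2 ^ k" "c \<in> D" unfolding pow2_multiples_def by blast
    have "(2::nat) ^ k \<le> m" using x ck by (auto intro: order_trans[rotated])
    then have "2 powr real k \<le> real m" by (simp add: powr_realpow flip: of_nat_le_iff)
    then have "real k \<le> log 2 (real m)" using assms(2) by (simp add: le_log_iff)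
    then have "k \<le> K" unfolding K_def by linarith
    then show "x \<in> (\<lambda>(c, k). c * 2 ^ k) ` (D \<times> {..K})" using ck by force
  qed
  then have "card (pow2_multiples D \<inter> {1..m}) \<le> card ((\<lambda>(c, k). c * 2 ^ k) ` (D \<times> {..K}))"
    using assms(1) by (intro card_mono) auto
  also have "\<dots> \<le> card (D \<times> {..K})" by (rule card_image_le) (simp add: assms(1))
  also have "\<dots> = card D * (K + 1)" by (simp add: card_cartesian_product)
  finally have "real (card (pow2_multiples D \<inter> {1..m})) \<le> real (card D * (K + 1))"
    by (simp only: of_nat_le_iff)
  also have "\<dots> = card D * (real K + 1)"
    by (simp add: algebra_simps)
  also have "\<dots> \<le> card D * (log 2 (real m) + 1)"
    using assms(2) unfolding K_def by (intro mult_left_mono) simp_all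
  finally show ?thesis .
qed

lemma pow2_multiples_counting_bigo:
  assumes "finite D"
  shows "(\<lambda>m. real (card (pow2_multiples D \<inter> {1..m}))) \<in> O(\<lambda>m. ln (real m))"
proof (rule bigoI[where c = "2 * card D / ln 2"])
  show "\<forall>\<^sub>F m in sequentially.
      norm (real (card (pow2_multiples D \<inter> {1..m}))) \<le> 2 * card D / ln 2 * norm (ln (real m))"
    unfolding eventually_sequentially
  proof (intro exI[of _ 2] allI impI)
    fix m :: nat assume m: "2 \<le> m"
    then have "1 \<le> log 2 (real m)" by (simp add: le_log_iff)
    then have "real (card D) * 1 \<le> card D * log 2 (real m)" by (rule mult_left_mono) simp
    then have "card D * (log 2 (real m) + 1) \<le> 2 * card D * log 2 (real m)"
      by (simp add: algebra_simps)
    also have "\<dots> = 2 * card D / ln 2 * ln (real m)" by (simp add: log_def)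
    finally show "norm (real (card (pow2_multiples D \<inter> {1..m}))) \<le> 2 * card D / ln 2 * norm (ln (real m))"
      using card_pow2_multiples_le[OF assms, of m] m by simp
  qed
qed

lemma fixed_partition_pow2_step:
  assumes "fixed_partition (pow2_multiples D) n" "fixed_partition D e" "\<forall>c\<in>D. odd c"
  shows "fixed_partition (pow2_multiples D) (e + 4 * n)"
proof -
  have doubled: "fixed_partition ((*) 2 ` pow2_multiples D) (4 * n)"
    using fixed_partition_scale[OF _ assms(1), of 2] by simp
  have "x \<notin> D" if "x \<in> (*) 2 ` pow2_multiples D" for x
  proof -
    from that have "even x" by auto
    with assms(3) show ?thesis by blast
  qed
  then have "(*) 2 ` pow2_multiples D \<inter> D = {}" by blast
  then have "fixed_partition ((*) 2 ` pow2_multiples D \<union> D) (4 * n + e)"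
    by (rule fixed_partition_union[OF doubled assms(2)])
  moreover have "(*) 2 ` pow2_multiples D \<union> D \<subseteq> pow2_multiples D"
    using double_pow2_multiples_subset subset_pow2_multiples by (rule Un_least)
  ultimately have "fixed_partition (pow2_multiples D) (4 * n + e)"
    by (rule fixed_partition_mono[rotated])
  then show ?thesis by (simp add: add.commute)
qed

lemma fixed_partition_odd_digits:
  assumes "e \<in> {0, 1, 6, 9, 10, 14, 19, 23, 31, 44}"
  shows "fixed_partition {1, 3, 5, 7} e"
proof -
  have union: "fixed_partition {1, 3, 5, 7} (a + b)"
    if "fixed_partition S a" "fixed_partition T b" "S \<inter> T = {}" "S \<union> T \<subseteq> {1, 3, 5, 7}"
    for S T a b
    using fixed_partition_mono[OF that(4) fixed_partition_union[OF that(1-3)]] .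
  have P0: "fixed_partition {} 0" by (rule fixed_partition_zero)
  have P1: "fixed_partition {1} 1" using fixed_partition_square[of 1] by simp
  have P9: "fixed_partition {3} 9" using fixed_partition_square[of 3] by simp
  have P6: "fixed_partition {1, 3} 6" using fixed_partition_swap_pair[of 1 3] by simp
  have P10: "fixed_partition {1, 5} 10" using fixed_partition_swap_pair[of 1 5] by simp
  have P14: "fixed_partition {1, 7} 14" using fixed_partition_swap_pair[of 1 7] by simp
  have P30: "fixed_partition {3, 5} 30" using fixed_partition_swap_pair[of 3 5] by simp
  have "fixed_partition {1, 3, 5, 7} 0" "fixed_partition {1, 3, 5, 7} 1"
    "fixed_partition {1, 3, 5, 7} 6" "fixed_partition {1, 3, 5, 7} 9"
    "fixed_partition {1, 3, 5, 7} 10" "fixed_partition {1, 3, 5, 7} 14"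
    using union[OF P0 P0] union[OF P0 P1] union[OF P0 P6] union[OF P0 P9]
      union[OF P1 P9] union[OF P0 P14] by simp_all
  moreover have "fixed_partition {1, 3, 5, 7} 19" "fixed_partition {1, 3, 5, 7} 23"
    "fixed_partition {1, 3, 5, 7} 31" "fixed_partition {1, 3, 5, 7} 44"
    using union[OF P9 P10] union[OF P9 P14] union[OF P30 P1] union[OF P30 P14] by auto
  ultimately show ?thesis using assms by auto
qed

lemma fixed_partition_pow2_exceptional:
  assumes "n \<in> {8, 12, 28, 32}"
  shows "fixed_partition (pow2_multiples {1, 3, 5, 7}) n"
proof -
  have pair_with_one: "fixed_partition (pow2_multiples {1, 3, 5, 7}) (2 * b)"
    if "b = c * 2 ^ k" "c \<in> {1, 3, 5, 7}" "1 < b" for b c k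
  proof -
    have "fixed_partition {1, b} (2 * 1 * b)"
      using that(3) by (intro fixed_partition_swap_pair) auto
    moreover have "1 \<in> pow2_multiples {1, 3, 5, 7}"
      by (rule subsetD[OF subset_pow2_multiples]) simp
    moreover have "b \<in> pow2_multiples {1, 3, 5, 7}"
      using pow2_multiplesI[OF that(2)] that(1) by simp
    ultimately show ?thesis
      using fixed_partition_mono[of "{1, b}"] by simp
  qed
  show ?thesis
    using assms pair_with_one[of 4 1 2] pair_with_one[of 6 3 1] pair_with_one[of 14 7 1]
      pair_with_one[of 16 1 4] by auto
qed

lemma small_decompositions:
  "list_all (\<lambda>n. n \<notin> {2, 3, 7, 8, 11, 12, 15, 28, 32} \<longrightarrow>
     (\<exists>e\<in>{0, 1, 6, 9, 10, 14, 19, 23, 31, 44}. e \<le> n \<and> 4 dvd (n - e) \<and> (n - e) div 4 \<notin> {2, 3, 7, 11, 15::nat}))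
   [0..<83]"
  by code_simp

lemma decomposition_odd_digits:
  fixes n :: nat
  assumes "n \<notin> {2, 3, 7, 8, 11, 12, 15, 28, 32}"
  obtains e where "e \<in> {0, 1, 6, 9, 10, 14, 19, 23, 31, 44}" "e \<le> n" "4 dvd (n - e)"
    "(n - e) div 4 \<notin> {2, 3, 7, 11, 15}"
proof (cases "n < 83")
  case True
  then have "n \<in> set [0..<83]" by simp
  from bspec[OF small_decompositions[unfolded list_all_iff] this] assms
  have "\<exists>e\<in>{0, 1, 6, 9, 10, 14, 19, 23, 31, 44}. e \<le> n \<and> 4 dvd (n - e) \<and>
      (n - e) div 4 \<notin> {2, 3, 7, 11, 15}"
    by (rule mp)
  with that show ?thesis by blast
next
  case False
  note choose_digit = that
  have large: thesis if "e \<in> {0, 1, 6, 19}" "e mod 4 = n mod 4" for e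
  proof (rule choose_digit[of e])
    show "e \<in> {0, 1, 6, 9, 10, 14, 19, 23, 31, 44}" "e \<le> n"
      using \<open>e \<in> {0, 1, 6, 19}\<close> False by auto
    then show "4 dvd (n - e)"
      using \<open>e mod 4 = n mod 4\<close> by (metis mod_eq_dvd_iff_nat)
    have "16 \<le> (n - e) div 4"
      using \<open>e \<in> {0, 1, 6, 19}\<close> False by auto
    then show "(n - e) div 4 \<notin> {2, 3, 7, 11, 15}" by auto
  qed
  consider "n mod 4 = 0" | "n mod 4 = 1" | "n mod 4 = 2" | "n mod 4 = 3" by arith
  then show ?thesis
    by cases (auto intro: large[of 0] large[of 1] large[of 6] large[of 19])
qed

lemma fixed_partition_pow2_odd_digits:
  assumes "n \<notin> {2, 3, 7, 11, 15}"
  shows "fixed_partition (pow2_multiples {1, 3, 5, 7}) n"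
  using assms
proof (induction n rule: less_induct)
  case (less n)
  consider "n = 0" | "n \<in> {8, 12, 28, 32}" | "0 < n" "n \<notin> {2, 3, 7, 8, 11, 12, 15, 28, 32}"
    using less.prems by auto
  then show ?case
  proof cases
    case 1
    then show ?thesis by (simp add: fixed_partition_zero)
  next
    case 2
    then show ?thesis by (rule fixed_partition_pow2_exceptional)
  next
    case 3
    then obtain e where e: "e \<in> {0, 1, 6, 9, 10, 14, 19, 23, 31, 44}" "e \<le> n" "4 dvd (n - e)"
      and quotient: "(n - e) div 4 \<notin> {2, 3, 7, 11, 15}"
      by (elim decomposition_odd_digits)
    define m where "m = (n - e) div 4"
    have n_eq: "n = e + 4 * m"
      using e(2,3) unfolding m_def by auto
    then have "m < n" using \<open>0 < n\<close> by linarith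
    then have "fixed_partition (pow2_multiples {1, 3, 5, 7}) m"
      using less.IH quotient unfolding m_def by blast
    then show ?thesis
      unfolding n_eq
      by (rule fixed_partition_pow2_step[OF _ fixed_partition_odd_digits[OF e(1)]]) auto
  qed
qed

theorem lemma2:
  shows "\<exists>A :: nat set. (\<forall>a\<in>A. a > 0) \<and> infinite A \<and>
    (\<forall>n::nat. n > 0 \<longrightarrow> n \<notin> {2,3,7,11,15} \<longrightarrow>
       (\<exists>P. wilf_partition n P \<and> iota_fixed P \<and> (\<forall>p\<in>#P. p \<in> A \<and> count P p \<in> A))) \<and>
    (\<lambda>m::nat. real (card (A \<inter> {1..m}))) \<in> O(\<lambda>m. ln (real m))"
proof (intro exI[of _ "pow2_multiples {1, 3, 5, 7}"] conjI allI impI)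
  show pos: "\<forall>a\<in>pow2_multiples {1, 3, 5, 7}. a > 0"
    using pow2_multiples_pos[of "{1, 3, 5, 7}"] by simp
  show "infinite (pow2_multiples {1, 3, 5, 7})"
    by (rule infinite_pow2_multiples[of 1]) auto
  show "(\<lambda>m. real (card (pow2_multiples {1, 3, 5, 7} \<inter> {1..m}))) \<in> O(\<lambda>m. ln (real m))"
    by (rule pow2_multiples_counting_bigo) simp
  fix n :: nat
  assume "n \<notin> {2, 3, 7, 11, 15}"
  then show "\<exists>P. wilf_partition n P \<and> iota_fixed P \<and>
      (\<forall>p\<in>#P. p \<in> pow2_multiples {1, 3, 5, 7} \<and> count P p \<in> pow2_multiples {1, 3, 5, 7})"
    using pos fixed_partition_pow2_odd_digits by (intro fixed_partition_wilf_partition)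
qed

end
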